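(* Let $N=n$ be prime, $f=x_1^N+\dots+x_N^N$, $S\subseteq S_N$, $G=S\ltimes\mathrm{SL}_f$. Let $u=\sigma g\in G$ ($\sigma\in S$, $g\in\mathrm{SL}_f$) where $\sigma=\prod_{a=1}^m\sigma_a$ is the decomposition into disjoint cycles (cycles of length 1 included) with $m\ge 2$, and let $i_a$ be the first index of the support of $\sigma_a$. Then there exist integers $d_1,\dots,d_m$ such that $u$ is conjugate in $G$ to $\prod_{a=1}^m\sigma_at_{i_a}^{d_a}$.
   Context: $\zeta=\exp(2\pi\sqrt{-1}/N)$; $t_k$ is the diagonal map multiplying $x_k$ by $\zeta$ and fixing the other coordinates; $G_f^d=\langle t_1,\dots,t_N\rangle$, $\mathrm{SL}_f=\{g\in G_f^d:\det g=1\}$; $S_N$ acts on $\mathbb C^N$ by permuting coordinates and $S\ltimes\mathrm{SL}_f\subseteq GL_N(\mathbb C)$ is the generated group. *)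

theory Defs
  imports "Jordan_Normal_Form.Determinant" "HOL-Combinatorics.Permutations" Complex_Main
begin

text \<open>Indices are 0-based: coordinates x_1..x_N correspond to 0..N-1.\<close>

definition zeta :: "nat \<Rightarrow> complex" where
  "zeta N = exp (2 * pi * \<i> / of_nat N)"

definition tmat :: "nat \<Rightarrow> nat \<Rightarrow> complex mat" where
  "tmat N k = mat N N (\<lambda>(i,j). if i = j then (if i = k then zeta N else 1) else 0)"

definition tpow :: "nat \<Rightarrow> nat \<Rightarrow> int \<Rightarrow> complex mat" where
  "tpow N k d = mat N N (\<lambda>(i,j). if i = j then (if i = k then zeta N powi d else 1) else 0)"

definition perm_mat :: "nat \<Rightarrow> (nat \<Rightarrow> nat) \<Rightarrow> complex mat" where
  "perm_mat N \<sigma> = mat N N (\<lambda>(i,j). if i = \<sigma> j then 1 else 0)"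

inductive_set gen_grp :: "nat \<Rightarrow> complex mat set \<Rightarrow> complex mat set" for N X where
  one: "1\<^sub>m N \<in> gen_grp N X"
| gen: "x \<in> X \<Longrightarrow> x \<in> gen_grp N X"
| mult: "a \<in> gen_grp N X \<Longrightarrow> b \<in> gen_grp N X \<Longrightarrow> a * b \<in> gen_grp N X"
| inv: "a \<in> gen_grp N X \<Longrightarrow> b \<in> carrier_mat N N \<Longrightarrow> a * b = 1\<^sub>m N \<Longrightarrow> b \<in> gen_grp N X"

definition Gfd :: "nat \<Rightarrow> complex mat set" where
  "Gfd N = gen_grp N {tmat N k | k. k < N}"

definition SLf :: "nat \<Rightarrow> complex mat set" where
  "SLf N = {g \<in> Gfd N. det g = 1}"

text \<open>The group S \<ltimes> SL_f generated by the permutation matrices of S and SL_f.\<close>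
definition SG :: "nat \<Rightarrow> (nat \<Rightarrow> nat) set \<Rightarrow> complex mat set" where
  "SG N S = gen_grp N (perm_mat N ` S \<union> SLf N)"

definition cyc_orbit :: "(nat \<Rightarrow> nat) \<Rightarrow> nat \<Rightarrow> nat set" where
  "cyc_orbit \<sigma> i = {(\<sigma> ^^ k) i | k. True}"

definition cycle_perm :: "(nat \<Rightarrow> nat) \<Rightarrow> nat \<Rightarrow> (nat \<Rightarrow> nat)" where
  "cycle_perm \<sigma> i = (\<lambda>j. if j \<in> cyc_orbit \<sigma> i then \<sigma> j else j)"

definition num_cycles :: "nat \<Rightarrow> (nat \<Rightarrow> nat) \<Rightarrow> nat" where
  "num_cycles N \<sigma> = card {cyc_orbit \<sigma> i | i. i < N}"

definition cycle_reps :: "nat \<Rightarrow> (nat \<Rightarrow> nat) \<Rightarrow> nat set" where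
  "cycle_reps N \<sigma> = {i. i < N \<and> i = Min (cyc_orbit \<sigma> i)}"

text \<open>prod_a sigma_a t_(i_a)^(d_a), the exponent of cycle a being d applied to its first index.\<close>
definition cycle_normal_form :: "nat \<Rightarrow> (nat \<Rightarrow> nat) \<Rightarrow> (nat \<Rightarrow> int) \<Rightarrow> complex mat" where
  "cycle_normal_form N \<sigma> d =
     foldr (\<lambda>i A. perm_mat N (cycle_perm \<sigma> i) * tpow N i (d i) * A)
           (sorted_list_of_set (cycle_reps N \<sigma>)) (1\<^sub>m N)"

definition conj_in :: "nat \<Rightarrow> complex mat set \<Rightarrow> complex mat \<Rightarrow> complex mat \<Rightarrow> bool" where
  "conj_in N G u v = (\<exists>h\<in>G. \<exists>h'\<in>G. h * h' = 1\<^sub>m N \<and> h * u * h' = v)"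

end

theory Submission
  imports Defs "HOL-Combinatorics.Orbits"
begin

(*
  Every element of SL_f is diagonal, diag(zeta^e_1, ..., zeta^e_N), so u = sigma g is a
  monomial matrix, and conjugating it by h = diag(zeta^a_1, ..., zeta^a_N) replaces the
  exponent e_j by a_(sigma j) + e_j - a_j.  Taking for a_j the sum of e along the
  sigma-path from j to the first index of its cycle kills all exponents except those at
  the first indices.  For h to lie in SL_f we need N | a_1 + ... + a_N; adding a constant c
  to a on one cycle changes this sum by c times the length of the cycle, which is prime to
  N because m >= 2 makes the cycle a proper nonempty subset of the N indices.  So u is
  even conjugate by an element of SL_f.
*)

definition monomial_mat :: "nat \<Rightarrow> (nat \<Rightarrow> nat) \<Rightarrow> (nat \<Rightarrow> 'a::comm_semiring_1) \<Rightarrow> 'a mat" where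
  "monomial_mat N \<pi> t = mat N N (\<lambda>(i, j). if i = \<pi> j then t j else 0)"

lemma monomial_mat_carrier [simp]: "monomial_mat N \<pi> t \<in> carrier_mat N N"
  by (simp add: monomial_mat_def)

lemma monomial_mat_cong:
  assumes "\<And>j. j < N \<Longrightarrow> \<pi> j = \<pi>' j" and "\<And>j. j < N \<Longrightarrow> t j = t' j"
  shows "monomial_mat N \<pi> t = monomial_mat N \<pi>' t'"
  using assms by (intro eq_matI) (auto simp: monomial_mat_def)

lemma monomial_mat_mult:
  assumes "\<And>j. j < N \<Longrightarrow> \<tau> j < N"
  shows "monomial_mat N \<pi> t * monomial_mat N \<tau> s = monomial_mat N (\<pi> \<circ> \<tau>) (\<lambda>j. t (\<tau> j) * s j)"
proof (rule eq_matI)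
  fix i j assume i: "i < dim_row (monomial_mat N (\<pi> \<circ> \<tau>) (\<lambda>j. t (\<tau> j) * s j))"
    and j: "j < dim_col (monomial_mat N (\<pi> \<circ> \<tau>) (\<lambda>j. t (\<tau> j) * s j))"
  have "(monomial_mat N \<pi> t * monomial_mat N \<tau> s) $$ (i, j)
      = (\<Sum>k<N. (if i = \<pi> k then t k else 0) * (if k = \<tau> j then s j else 0))"
    using i j by (simp add: monomial_mat_def scalar_prod_def atLeast0LessThan)
  also have "\<dots> = (\<Sum>k<N. if k = \<tau> j then (if i = \<pi> k then t k else 0) * s j else 0)"
    by (rule sum.cong) auto
  also have "\<dots> = (if i = \<pi> (\<tau> j) then t (\<tau> j) * s j else 0)"
    using assms j by (simp add: monomial_mat_def)
  finally show "(monomial_mat N \<pi> t * monomial_mat N \<tau> s) $$ (i, j)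
      = monomial_mat N (\<pi> \<circ> \<tau>) (\<lambda>j. t (\<tau> j) * s j) $$ (i, j)"
    using i j by (simp add: monomial_mat_def)
qed (simp_all add: monomial_mat_def)

lemma one_mat_eq_monomial_mat: "1\<^sub>m N = monomial_mat N id (\<lambda>_. 1)"
  by (intro eq_matI) (auto simp: monomial_mat_def)

lemma perm_mat_eq_monomial_mat: "perm_mat N \<sigma> = monomial_mat N \<sigma> (\<lambda>_. 1)"
  by (intro eq_matI) (auto simp: monomial_mat_def perm_mat_def)

lemma det_diagonal_monomial_mat: "det (monomial_mat N id t) = (\<Prod>i<N. t i)"
proof -
  have "upper_triangular (monomial_mat N id t)"
    by (auto simp: monomial_mat_def upper_triangular_def)
  then have "det (monomial_mat N id t) = prod_list (diag_mat (monomial_mat N id t))"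
    by (rule det_upper_triangular[OF _ monomial_mat_carrier])
  also have "\<dots> = prod_list (map t [0..<N])"
    by (auto simp: diag_mat_def monomial_mat_def intro!: arg_cong[where f = prod_list])
  also have "\<dots> = (\<Prod>i<N. t i)"
    by (simp add: prod.distinct_set_conv_list[symmetric] atLeast0LessThan)
  finally show ?thesis .
qed

lemma zeta_power_self: "zeta N ^ N = 1"
proof (cases "N = 0")
  case False
  have "zeta N ^ N = exp (of_nat N * (2 * pi * \<i> / of_nat N))"
    unfolding zeta_def by (rule exp_of_nat_mult[symmetric])
  also have "\<dots> = exp (2 * pi * \<i>)"
    using False by simp
  finally show ?thesis
    by simp
qed simp

lemma zeta_nonzero [simp]: "zeta N \<noteq> 0"
  by (simp add: zeta_def)

definition zeta_diag :: "nat \<Rightarrow> (nat \<Rightarrow> int) \<Rightarrow> complex mat" where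
  "zeta_diag N a = monomial_mat N id (\<lambda>i. zeta N powi a i)"

lemma zeta_diag_carrier [simp]: "zeta_diag N a \<in> carrier_mat N N"
  by (simp add: zeta_diag_def)

lemma zeta_diag_mult: "zeta_diag N a * zeta_diag N b = zeta_diag N (\<lambda>i. a i + b i)"
  by (simp add: zeta_diag_def monomial_mat_mult power_int_add)

lemma zeta_diag_zero: "zeta_diag N (\<lambda>_. 0) = 1\<^sub>m N"
  by (simp add: zeta_diag_def one_mat_eq_monomial_mat)

lemma zeta_diag_inverse: "zeta_diag N a * zeta_diag N (\<lambda>i. - a i) = 1\<^sub>m N"
  by (simp add: zeta_diag_mult zeta_diag_zero)

lemma tmat_eq_zeta_diag: "tmat N k = zeta_diag N (\<lambda>i. if i = k then 1 else 0)"
  by (intro eq_matI) (auto simp: tmat_def zeta_diag_def monomial_mat_def)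

lemma tpow_eq_monomial_mat: "tpow N k d = monomial_mat N id (\<lambda>i. if i = k then zeta N powi d else 1)"
  by (intro eq_matI) (auto simp: tpow_def monomial_mat_def)

lemma det_zeta_diag: "det (zeta_diag N a) = zeta N powi (\<Sum>i<N. a i)"
proof -
  have "zeta N powi (\<Sum>i\<in>A. a i) = (\<Prod>i\<in>A. zeta N powi a i)" if "finite A" for A
    using that by induction (simp_all add: power_int_add)
  then show ?thesis
    by (simp add: zeta_diag_def det_diagonal_monomial_mat)
qed

lemma Gfd_imp_zeta_diag: "g \<in> Gfd N \<Longrightarrow> \<exists>a. g = zeta_diag N a"
  unfolding Gfd_def
proof (induction rule: gen_grp.induct)
  case one
  show ?case
    using zeta_diag_zero by metis
next
  case (gen x)
  then show ?case
    by (auto simp: tmat_eq_zeta_diag)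
next
  case (mult x y)
  then show ?case
    by (auto simp: zeta_diag_mult)
next
  case (inv x y)
  then obtain a where x: "x = zeta_diag N a"
    by blast
  have "y = (zeta_diag N (\<lambda>i. - a i) * x) * y"
    using inv.hyps(2) zeta_diag_inverse[of N "\<lambda>i. - a i"] by (simp add: x)
  also have "\<dots> = zeta_diag N (\<lambda>i. - a i)"
    using inv.hyps(2,3)
    by (simp add: x assoc_mult_mat[of _ N N _ N _ N] right_mult_one_mat[OF zeta_diag_carrier])
  finally show ?case
    by blast
qed

lemma zeta_diag_uminus_in_Gfd: "zeta_diag N a \<in> Gfd N \<Longrightarrow> zeta_diag N (\<lambda>i. - a i) \<in> Gfd N"
  unfolding Gfd_def by (rule gen_grp.inv[OF _ zeta_diag_carrier zeta_diag_inverse])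

lemma zeta_diag_single_in_Gfd:
  assumes "k < N"
  shows "zeta_diag N (\<lambda>i. if i = k then d else 0) \<in> Gfd N"
proof -
  have nat_case: "zeta_diag N (\<lambda>i. if i = k then int n else 0) \<in> Gfd N" for n
  proof (induction n)
    case 0
    have "zeta_diag N (\<lambda>i. if i = k then int 0 else 0) = 1\<^sub>m N"
      by (auto simp: zeta_diag_def one_mat_eq_monomial_mat intro: monomial_mat_cong)
    then show ?case
      by (simp add: Gfd_def gen_grp.one)
  next
    case (Suc n)
    have "zeta_diag N (\<lambda>i. if i = k then int (Suc n) else 0)
        = tmat N k * zeta_diag N (\<lambda>i. if i = k then int n else 0)"
      by (auto simp: tmat_eq_zeta_diag zeta_diag_mult intro!: arg_cong[where f = "zeta_diag N"])
    moreover have "tmat N k \<in> Gfd N"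
      using assms by (auto simp: Gfd_def intro: gen_grp.gen)
    ultimately show ?case
      using Suc.IH by (simp add: Gfd_def gen_grp.mult)
  qed
  show ?thesis
  proof (cases "d \<ge> 0")
    case True
    then obtain n where "d = int n"
      by (metis nonneg_eq_int)
    then show ?thesis
      using nat_case by metis
  next
    case False
    then obtain n where "d = - int n"
      by (metis neg_int_cases linorder_not_le less_imp_le)
    then have "(\<lambda>i. - (if i = k then int n else 0)) = (\<lambda>i. if i = k then d else 0)"
      by auto
    then show ?thesis
      using zeta_diag_uminus_in_Gfd[OF nat_case[of n]] by simp
  qed
qed

lemma zeta_diag_in_Gfd: "zeta_diag N a \<in> Gfd N"
proof -
  have "zeta_diag N (\<lambda>i. if i < n then a i else 0) \<in> Gfd N" if "n \<le> N" for n
    using that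
  proof (induction n)
    case 0
    then show ?case
      by (simp add: zeta_diag_zero Gfd_def gen_grp.one)
  next
    case (Suc n)
    have "zeta_diag N (\<lambda>i. if i < Suc n then a i else 0)
        = zeta_diag N (\<lambda>i. if i = n then a n else 0) * zeta_diag N (\<lambda>i. if i < n then a i else 0)"
      by (auto simp: zeta_diag_mult less_Suc_eq intro!: arg_cong[where f = "zeta_diag N"])
    then show ?case
      using Suc zeta_diag_single_in_Gfd[of n N "a n"] by (simp add: Gfd_def gen_grp.mult)
  qed
  moreover have "zeta_diag N (\<lambda>i. if i < N then a i else 0) = zeta_diag N a"
    by (auto simp: zeta_diag_def intro: monomial_mat_cong)
  ultimately show ?thesis
    by fastforce
qed

lemma zeta_diag_in_SLf:
  assumes "int N dvd (\<Sum>i<N. a i)"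
  shows "zeta_diag N a \<in> SLf N"
proof -
  obtain c where "(\<Sum>i<N. a i) = int N * c"
    using assms by blast
  then have "det (zeta_diag N a) = (zeta N ^ N) powi c"
    by (simp add: det_zeta_diag power_int_mult)
  then show ?thesis
    by (simp add: SLf_def zeta_power_self zeta_diag_in_Gfd)
qed

lemma cyc_orbit_eq_orbit: "permutation \<sigma> \<Longrightarrow> cyc_orbit \<sigma> i = orbit \<sigma> i"
  by (simp add: cyc_orbit_def orbit_altdef_permutation)

lemma orbit_eq_if_mem: "permutation \<sigma> \<Longrightarrow> x \<in> orbit \<sigma> j \<Longrightarrow> orbit \<sigma> x = orbit \<sigma> j"
  by (meson cyclic_on_orbit' orbit_cyclic_eq3)

lemma mem_orbit_iff: "permutation \<sigma> \<Longrightarrow> x \<in> orbit \<sigma> j \<longleftrightarrow> orbit \<sigma> x = orbit \<sigma> j"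
  using orbit_eq_if_mem permutation_self_in_orbit by metis

definition cycle_rep :: "('a::linorder \<Rightarrow> 'a) \<Rightarrow> 'a \<Rightarrow> 'a" where
  "cycle_rep \<sigma> j = Min (orbit \<sigma> j)"

lemma cycle_rep_in_orbit: "permutation \<sigma> \<Longrightarrow> cycle_rep \<sigma> j \<in> orbit \<sigma> j"
  unfolding cycle_rep_def
  by (intro Min_in finite_orbit permutation_self_in_orbit orbit_nonempty)

lemma cycle_rep_step: "permutation \<sigma> \<Longrightarrow> cycle_rep \<sigma> (\<sigma> j) = cycle_rep \<sigma> j"
  by (simp add: cycle_rep_def permutation_orbit_step)

lemma orbit_disjoint_if_cycle_rep:
  assumes "permutation \<sigma>" "cycle_rep \<sigma> r = r" "cycle_rep \<sigma> r' = r'" "r \<noteq> r'"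
  shows "orbit \<sigma> r \<inter> orbit \<sigma> r' = {}"
proof (rule ccontr)
  assume "orbit \<sigma> r \<inter> orbit \<sigma> r' \<noteq> {}"
  then obtain x where "x \<in> orbit \<sigma> r" "x \<in> orbit \<sigma> r'"
    by blast
  then have "orbit \<sigma> r = orbit \<sigma> r'"
    using assms(1) orbit_eq_if_mem by metis
  then show False
    using assms(2-4) unfolding cycle_rep_def by metis
qed

lemma cycle_reps_eq:
  assumes "\<sigma> permutes {..<N}"
  shows "cycle_reps N \<sigma> = {j. j < N \<and> cycle_rep \<sigma> j = j}"
  using cyc_orbit_eq_orbit[OF permutes_imp_permutation[OF finite_lessThan assms]]
  unfolding cycle_reps_def cycle_rep_def by (simp add: eq_commute)

lemma cycle_rep_in_cycle_reps:
  assumes "\<sigma> permutes {..<N}" "j < N"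
  shows "cycle_rep \<sigma> j \<in> cycle_reps N \<sigma>"
proof -
  have \<sigma>: "permutation \<sigma>"
    using assms(1) by (rule permutes_imp_permutation[OF finite_lessThan])
  have r: "cycle_rep \<sigma> j \<in> orbit \<sigma> j"
    using \<sigma> by (rule cycle_rep_in_orbit)
  moreover have "orbit \<sigma> j \<subseteq> {..<N}"
    using assms by (intro permutes_orbit_subset) auto
  moreover have "cycle_rep \<sigma> (cycle_rep \<sigma> j) = cycle_rep \<sigma> j"
    using orbit_eq_if_mem[OF \<sigma> r] by (simp add: cycle_rep_def)
  ultimately show ?thesis
    using assms(1) by (auto simp: cycle_reps_eq)
qed

definition path_sum :: "('a::linorder \<Rightarrow> 'a) \<Rightarrow> ('a \<Rightarrow> 'b::comm_monoid_add) \<Rightarrow> 'a \<Rightarrow> 'b" where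
  "path_sum \<sigma> e j = (\<Sum>l < funpow_dist \<sigma> j (cycle_rep \<sigma> j). e ((\<sigma> ^^ l) j))"

lemma path_sum_step:
  assumes "permutation \<sigma>" "cycle_rep \<sigma> j \<noteq> j"
  shows "path_sum \<sigma> e j = e j + path_sum \<sigma> e (\<sigma> j)"
proof -
  let ?n = "funpow_dist \<sigma> (\<sigma> j) (cycle_rep \<sigma> j)"
  have "funpow_dist \<sigma> j (cycle_rep \<sigma> j) = Suc ?n"
    using assms by (intro funpow_dist_step cycle_rep_in_orbit) auto
  then have "path_sum \<sigma> e j = (\<Sum>l < Suc ?n. e ((\<sigma> ^^ l) j))"
    unfolding path_sum_def by (rule arg_cong)
  also have "\<dots> = e j + (\<Sum>l < ?n. e ((\<sigma> ^^ Suc l) j))"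
    by (simp only: sum.lessThan_Suc_shift funpow_0)
  also have "\<dots> = e j + path_sum \<sigma> e (\<sigma> j)"
    by (simp add: path_sum_def cycle_rep_step[OF assms(1)] funpow_swap1)
  finally show ?thesis .
qed

lemma prime_exists_dvd_add_mult:
  assumes "prime p" "0 < L" "L < p"
  obtains c :: int where "int p dvd s + c * int L"
proof -
  have "coprime p L"
    using assms by (intro prime_imp_coprime) (auto dest: dvd_imp_le)
  then have "gcd (int L) (int p) = 1"
    by (simp add: coprime_commute)
  then obtain x y where xy: "x * int L + y * int p = 1"
    using bezout_int[of "int L" "int p"] by auto
  have "s + (- s * x) * int L = int p * (s * y)"
    using arg_cong[OF xy, of "(*) s"] by (simp add: algebra_simps)
  then show ?thesis
    using that[of "- s * x"] by simp
qed

lemma card_orbit_less: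
  assumes "\<sigma> permutes {..<N}" "num_cycles N \<sigma> \<ge> 2" "j < N"
  shows "card (orbit \<sigma> j) < N"
proof -
  have \<sigma>: "permutation \<sigma>"
    using assms(1) by (rule permutes_imp_permutation[OF finite_lessThan])
  have sub: "orbit \<sigma> j \<subseteq> {..<N}"
    using assms by (intro permutes_orbit_subset) auto
  obtain i where i: "i < N" "orbit \<sigma> i \<noteq> orbit \<sigma> j"
  proof (rule ccontr)
    assume "\<not> thesis"
    then have "{cyc_orbit \<sigma> i | i. i < N} = {orbit \<sigma> j}"
      using that assms(3) cyc_orbit_eq_orbit[OF \<sigma>] by auto
    then show False
      using assms(2) by (simp add: num_cycles_def)
  qed
  then have "i \<notin> orbit \<sigma> j"
    using mem_orbit_iff[OF \<sigma>] by blast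
  then have "orbit \<sigma> j \<subset> {..<N}"
    using sub i(1) by blast
  then show ?thesis
    using psubset_card_mono[of "{..<N}"] by simp
qed

lemma exists_coboundary_with_sum_dvd:
  fixes e :: "nat \<Rightarrow> int"
  assumes "prime N" "\<sigma> permutes {..<N}" "num_cycles N \<sigma> \<ge> 2"
  obtains a where "int N dvd (\<Sum>j<N. a j)"
    and "\<And>j. j < N \<Longrightarrow> j \<notin> cycle_reps N \<sigma> \<Longrightarrow> a (\<sigma> j) + e j = a j"
proof -
  have \<sigma>: "permutation \<sigma>"
    using assms(2) by (rule permutes_imp_permutation[OF finite_lessThan])
  have "0 < N"
    using assms(1) by (rule prime_gt_0_nat)
  define B where "B = orbit \<sigma> 0"
  have B_sub: "B \<subseteq> {..<N}"
    unfolding B_def using assms(2) \<open>0 < N\<close> by (intro permutes_orbit_subset) auto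
  have "0 < card B"
    unfolding B_def using \<sigma> orbit_nonempty
    by (simp add: card_gt_0_iff finite_orbit permutation_self_in_orbit)
  moreover have "card B < N"
    unfolding B_def using assms(2,3) \<open>0 < N\<close> by (rule card_orbit_less)
  ultimately obtain c where c: "int N dvd (\<Sum>j<N. path_sum \<sigma> e j) + c * int (card B)"
    using prime_exists_dvd_add_mult[OF assms(1)] by blast
  define a where "a j = path_sum \<sigma> e j + (if j \<in> B then c else 0)" for j
  show thesis
  proof
    have "(\<Sum>j<N. if j \<in> B then c else 0) = (\<Sum>j\<in>{..<N} \<inter> B. c)"
      by (rule sum.inter_restrict[symmetric]) simp
    also have "\<dots> = c * int (card B)"
      using B_sub by (simp add: Int_absorb1)
    finally show "int N dvd (\<Sum>j<N. a j)"
      using c by (simp add: a_def sum.distrib)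
  next
    fix j assume "j < N" "j \<notin> cycle_reps N \<sigma>"
    then have "cycle_rep \<sigma> j \<noteq> j"
      using assms(2) by (simp add: cycle_reps_eq)
    moreover have "\<sigma> j \<in> B \<longleftrightarrow> j \<in> B"
      unfolding B_def using \<sigma> by (simp add: mem_orbit_iff permutation_orbit_step)
    ultimately show "a (\<sigma> j) + e j = a j"
      using path_sum_step[OF \<sigma>, of j e] by (simp add: a_def)
  qed
qed

lemma zeta_diag_conj_perm_mat:
  assumes "\<And>j. j < N \<Longrightarrow> \<sigma> j < N"
  shows "zeta_diag N a * (perm_mat N \<sigma> * zeta_diag N e) * zeta_diag N (\<lambda>i. - a i)
       = monomial_mat N \<sigma> (\<lambda>j. zeta N powi (a (\<sigma> j) + e j - a j))"
proof -
  have "zeta_diag N a * (perm_mat N \<sigma> * zeta_diag N e) * zeta_diag N (\<lambda>i. - a i)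
      = monomial_mat N \<sigma> (\<lambda>j. zeta N powi a (\<sigma> j) * zeta N powi e j * zeta N powi (- a j))"
    using assms by (simp add: zeta_diag_def perm_mat_eq_monomial_mat monomial_mat_mult)
  also have "\<dots> = monomial_mat N \<sigma> (\<lambda>j. zeta N powi (a (\<sigma> j) + e j - a j))"
    by (simp add: power_int_add power_int_diff power_int_minus field_simps)
  finally show ?thesis .
qed

lemma cycle_perm_eq_perm_restrict: "permutation \<sigma> \<Longrightarrow> cycle_perm \<sigma> i = perm_restrict \<sigma> (orbit \<sigma> i)"
  by (simp add: cycle_perm_def perm_restrict_def cyc_orbit_eq_orbit fun_eq_iff)

lemma cycle_factor_mult_monomial_mat:
  assumes "\<sigma> permutes {..<N}" "orbit \<sigma> i \<inter> U = {}" "\<And>j. j \<in> U \<Longrightarrow> \<sigma> j \<in> U"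
  shows "perm_mat N (cycle_perm \<sigma> i) * tpow N i c * monomial_mat N (perm_restrict \<sigma> U) t
       = monomial_mat N (perm_restrict \<sigma> (orbit \<sigma> i \<union> U))
           (\<lambda>j. (if j = i then zeta N powi c else 1) * t j)"
proof -
  have \<sigma>: "permutation \<sigma>"
    using assms(1) by (rule permutes_imp_permutation[OF finite_lessThan])
  have "i \<notin> U"
    using assms(2) permutation_self_in_orbit[OF \<sigma>] by blast
  have "perm_restrict \<sigma> U j < N" if "j < N" for j
    using assms(1) that by (metis perm_restrict_def permutes_in_image lessThan_iff)
  then have "perm_mat N (cycle_perm \<sigma> i) * tpow N i c * monomial_mat N (perm_restrict \<sigma> U) t
      = monomial_mat N (perm_restrict \<sigma> (orbit \<sigma> i) \<circ> perm_restrict \<sigma> U)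
          (\<lambda>j. (if perm_restrict \<sigma> U j = i then zeta N powi c else 1) * t j)"
    by (simp add: cycle_perm_eq_perm_restrict[OF \<sigma>] perm_mat_eq_monomial_mat
        tpow_eq_monomial_mat monomial_mat_mult)
  also have "\<dots> = monomial_mat N (perm_restrict \<sigma> (orbit \<sigma> i \<union> U))
      (\<lambda>j. (if j = i then zeta N powi c else 1) * t j)"
  proof (rule monomial_mat_cong)
    fix j
    show "(perm_restrict \<sigma> (orbit \<sigma> i) \<circ> perm_restrict \<sigma> U) j = perm_restrict \<sigma> (orbit \<sigma> i \<union> U) j"
      using assms(2,3) by (auto simp: perm_restrict_def)
    have "perm_restrict \<sigma> U j = i \<longleftrightarrow> j = i"
      using assms(3) \<open>i \<notin> U\<close> by (auto simp: perm_restrict_def)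
    then show "(if perm_restrict \<sigma> U j = i then zeta N powi c else 1) * t j
        = (if j = i then zeta N powi c else 1) * t j"
      by simp
  qed
  finally show ?thesis .
qed

lemma foldr_cycles_eq_monomial_mat:
  assumes "\<sigma> permutes {..<N}" "distinct L" "set L \<subseteq> cycle_reps N \<sigma>"
  shows "foldr (\<lambda>i A. perm_mat N (cycle_perm \<sigma> i) * tpow N i (d i) * A) L (1\<^sub>m N)
       = monomial_mat N (perm_restrict \<sigma> (\<Union>i\<in>set L. orbit \<sigma> i))
           (\<lambda>j. if j \<in> set L then zeta N powi d j else 1)"
  using assms(2,3)
proof (induction L)
  case Nil
  show ?case
    by (auto simp: one_mat_eq_monomial_mat perm_restrict_def intro: monomial_mat_cong)
next
  case (Cons i L)
  have \<sigma>: "permutation \<sigma>"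
    using assms(1) by (rule permutes_imp_permutation[OF finite_lessThan])
  have disjoint: "orbit \<sigma> i \<inter> orbit \<sigma> l = {}" if "l \<in> set L" for l
  proof (rule orbit_disjoint_if_cycle_rep[OF \<sigma>])
    show "cycle_rep \<sigma> i = i" "cycle_rep \<sigma> l = l"
      using Cons.prems(2) that by (auto simp: cycle_reps_eq[OF assms(1)])
    show "i \<noteq> l"
      using Cons.prems(1) that by auto
  qed
  define U where "U = (\<Union>l\<in>set L. orbit \<sigma> l)"
  have "orbit \<sigma> i \<inter> U = {}"
    unfolding U_def using disjoint by blast
  moreover have "\<sigma> j \<in> U" if "j \<in> U" for j
    using that unfolding U_def by (blast intro: orbit.step)
  ultimately have "perm_mat N (cycle_perm \<sigma> i) * tpow N i (d i)
        * monomial_mat N (perm_restrict \<sigma> U) (\<lambda>j. if j \<in> set L then zeta N powi d j else 1)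
      = monomial_mat N (perm_restrict \<sigma> (orbit \<sigma> i \<union> U))
        (\<lambda>j. (if j = i then zeta N powi d i else 1) * (if j \<in> set L then zeta N powi d j else 1))"
    by (rule cycle_factor_mult_monomial_mat[OF assms(1)])
  then show ?case
    using Cons by (auto simp: U_def intro!: monomial_mat_cong)
qed

lemma cycle_normal_form_eq_monomial_mat:
  assumes "\<sigma> permutes {..<N}"
  shows "cycle_normal_form N \<sigma> d
       = monomial_mat N \<sigma> (\<lambda>j. if j \<in> cycle_reps N \<sigma> then zeta N powi d j else 1)"
proof -
  have \<sigma>: "permutation \<sigma>"
    using assms by (rule permutes_imp_permutation[OF finite_lessThan])
  have fin: "finite (cycle_reps N \<sigma>)"
    by (simp add: cycle_reps_def)
  have "cycle_normal_form N \<sigma> d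
      = monomial_mat N (perm_restrict \<sigma> (\<Union>i\<in>cycle_reps N \<sigma>. orbit \<sigma> i))
          (\<lambda>j. if j \<in> cycle_reps N \<sigma> then zeta N powi d j else 1)"
    unfolding cycle_normal_form_def using assms fin
    by (simp add: foldr_cycles_eq_monomial_mat)
  also have "\<dots> = monomial_mat N \<sigma> (\<lambda>j. if j \<in> cycle_reps N \<sigma> then zeta N powi d j else 1)"
  proof (rule monomial_mat_cong)
    fix j assume "j < N"
    then have "cycle_rep \<sigma> j \<in> cycle_reps N \<sigma>"
      by (rule cycle_rep_in_cycle_reps[OF assms])
    moreover have "j \<in> orbit \<sigma> (cycle_rep \<sigma> j)"
      using \<sigma> cycle_rep_in_orbit mem_orbit_iff by metis
    ultimately show "perm_restrict \<sigma> (\<Union>i\<in>cycle_reps N \<sigma>. orbit \<sigma> i) j = \<sigma> j"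
      by (auto simp: perm_restrict_def)
  qed simp
  finally show ?thesis .
qed

theorem proposition5:
  fixes N :: nat and S :: "(nat \<Rightarrow> nat) set" and \<sigma> :: "nat \<Rightarrow> nat" and g :: "complex mat"
  assumes "prime N"
    and "\<forall>\<tau>\<in>S. \<tau> permutes {..<N}"
    and "\<sigma> \<in> S"
    and "g \<in> SLf N"
    and "num_cycles N \<sigma> \<ge> 2"
  shows "\<exists>d :: nat \<Rightarrow> int.
           conj_in N (SG N S) (perm_mat N \<sigma> * g) (cycle_normal_form N \<sigma> d)"
proof -
  have \<sigma>: "\<sigma> permutes {..<N}"
    using assms(2,3) by blast
  obtain e where g: "g = zeta_diag N e"
    using assms(4) Gfd_imp_zeta_diag by (auto simp: SLf_def)
  obtain a where a_dvd: "int N dvd (\<Sum>j<N. a j)"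
    and a_cob: "\<And>j. j < N \<Longrightarrow> j \<notin> cycle_reps N \<sigma> \<Longrightarrow> a (\<sigma> j) + e j = a j"
    using exists_coboundary_with_sum_dvd[OF assms(1) \<sigma> assms(5)] by blast
  define d where "d j = a (\<sigma> j) + e j - a j" for j
  have "zeta_diag N a * (perm_mat N \<sigma> * g) * zeta_diag N (\<lambda>i. - a i)
      = monomial_mat N \<sigma> (\<lambda>j. zeta N powi d j)"
    unfolding g d_def using \<sigma>
    by (intro zeta_diag_conj_perm_mat) (metis permutes_in_image lessThan_iff)
  also have "\<dots> = cycle_normal_form N \<sigma> d"
    unfolding cycle_normal_form_eq_monomial_mat[OF \<sigma>]
    by (rule monomial_mat_cong) (simp_all add: d_def a_cob)
  finally have "zeta_diag N a * (perm_mat N \<sigma> * g) * zeta_diag N (\<lambda>i. - a i)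
      = cycle_normal_form N \<sigma> d" .
  moreover have "zeta_diag N a \<in> SG N S" "zeta_diag N (\<lambda>i. - a i) \<in> SG N S"
    using a_dvd zeta_diag_in_SLf by (auto simp: SG_def sum_negf intro: gen_grp.gen)
  ultimately show ?thesis
    unfolding conj_in_def using zeta_diag_inverse by blast
qed

end
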